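(* Let $E,J,R,Q\in\mathbb{R}^{n\times n}$ with $J=-J^T$, $R=R^T\ge0$ and $Q^TE=E^TQ\ge0$. Then the pencil $sE-(J-R)Q$ is regular if and only if $\ker E\cap\ker(Q^TJQ)\cap\ker(Q^TRQ)=\{0\}$. Furthermore, if this holds and additionally $\ker Q\subseteq\ker E$, then $[E,(J-R)Q]$ is stable.
   Context: A pencil $sE-A$ is regular if $\det(sE-A)$ is not the zero polynomial. For $E,A\in\mathbb{R}^{n\times n}$, $[E,A]$ is stable if every $x\in C^\infty(\mathbb{R},\mathbb{R}^n)$ with $\tfrac{d}{dt}Ex=Ax$ is bounded on $[0,\infty)$. *)

theory Defs
  imports "HOL-Analysis.Analysis" "HOL-Computational_Algebra.Polynomial"
begin

definition pencil :: "real^'n^'n \<Rightarrow> real^'n^'n \<Rightarrow> real poly^'n^'n" where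
  "pencil E A = (\<chi> i j. [:- (A $ i $ j), E $ i $ j:])"

definition regular_pencil :: "real^'n^'n \<Rightarrow> real^'n^'n \<Rightarrow> bool" where
  "regular_pencil E A \<longleftrightarrow> det (pencil E A) \<noteq> 0"

definition smooth_fun :: "(real \<Rightarrow> real^'n) \<Rightarrow> bool" where
  "smooth_fun x \<longleftrightarrow> (\<exists>f :: nat \<Rightarrow> real \<Rightarrow> real^'n. f 0 = x \<and>
     (\<forall>k t. (f k has_vector_derivative f (Suc k) t) (at t)))"

definition stable_pair :: "real^'n^'n \<Rightarrow> real^'n^'n \<Rightarrow> bool" where
  "stable_pair E A \<longleftrightarrow> (\<forall>x. smooth_fun x \<and>
     (\<forall>t. ((\<lambda>s. E *v x s) has_vector_derivative (A *v x t)) (at t))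
     \<longrightarrow> bounded (x ` {0..}))"

definition ker :: "real^'n^'n \<Rightarrow> (real^'n) set" where
  "ker M = {v. M *v v = 0}"

definition psd :: "real^'n^'n \<Rightarrow> bool" where
  "psd M \<longleftrightarrow> (\<forall>v. 0 \<le> v \<bullet> (M *v v))"

end

theory Submission
  imports Defs
begin

text \<open>
  The quadratic form \<open>x \<bullet> (Q\<^sup>T E x)\<close> is an energy whose derivative along solutions of
  \<open>E x' = (J - R) Q x\<close> is \<open>-2 (Qx) \<bullet> R (Qx) \<le> 0\<close>. A nonzero vector of the common kernel makes
  \<open>tE - (J - R)Q\<close> singular for every \<open>t\<close>: either it lies in its kernel, or \<open>Qv\<close> is orthogonal
  to its range. Conversely, a kernel vector of \<open>tE - (J - R)Q\<close> with \<open>t > 0\<close> carries no energy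
  and no dissipation, hence satisfies \<open>t E v = J Q v\<close> on a subspace where \<open>E\<close> is injective,
  which is impossible for large \<open>t\<close>. For stability, smooth solutions stay in the subspace of
  states admitting two consistent derivatives; when \<open>ker Q \<subseteq> ker E\<close>, the energy is positive
  definite there, hence coercive, and it does not increase.
\<close>

declare transpose_matrix_vector [simp del]

lemma inner_matrix_vector_transpose: "(x::real^'n) \<bullet> (M *v y) = (transpose M *v x) \<bullet> y"
  by (simp add: dot_lmul_matrix transpose_matrix_vector)

lemma inner_symmetric_matrix:
  "transpose M = M \<Longrightarrow> (a::real^'n) \<bullet> (M *v b) = b \<bullet> (M *v a)"
  by (metis inner_matrix_vector_transpose inner_commute)

lemma inner_skew_matrix:
  assumes "transpose M = - M"
  shows "(a::real^'n) \<bullet> (M *v b) = - (b \<bullet> (M *v a))"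
proof -
  have "a \<bullet> (M *v b) = ((- M) *v a) \<bullet> b" using assms by (simp add: inner_matrix_vector_transpose)
  also have "(- M) *v a = - (M *v a)" by (simp add: vec_eq_iff matrix_vector_mult_def sum_negf)
  finally show ?thesis by (simp add: inner_commute)
qed

lemma psd_quadratic_form_zero_imp_kernel:
  fixes M :: "real^'n^'n"
  assumes sym: "transpose M = M" and psd: "psd M" and zero: "x \<bullet> (M *v x) = 0"
  shows "M *v x = 0"
proof -
  define y where "y = M *v x"
  define b where "b = y \<bullet> (M *v y)"
  have "b \<ge> 0" using psd unfolding psd_def b_def by auto
  have expand: "0 \<le> 2 * s * (y \<bullet> y) + s\<^sup>2 * b" for s
  proof -
    have "0 \<le> (x + s *\<^sub>R y) \<bullet> (M *v (x + s *\<^sub>R y))"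
      using psd unfolding psd_def by auto
    also have "\<dots> = 2 * s * (y \<bullet> y) + s\<^sup>2 * b"
      using zero inner_symmetric_matrix[OF sym, of x y]
      by (simp add: y_def b_def algebra_simps power2_eq_square)
    finally show ?thesis .
  qed
  have "y \<bullet> y \<le> 0"
  proof (rule ccontr)
    assume "\<not> y \<bullet> y \<le> 0"
    then have pos: "y \<bullet> y > 0" by linarith
    define s where "s = - (y \<bullet> y) / (b + 1)"
    have "s < 0" and s_b: "s * (b + 1) = - (y \<bullet> y)"
      using pos \<open>b \<ge> 0\<close> by (simp_all add: s_def divide_neg_pos)
    have "s\<^sup>2 * b \<le> s\<^sup>2 * (b + 1)" by (simp add: mult_left_mono)
    also have "\<dots> = - s * (y \<bullet> y)" using s_b by (simp add: power2_eq_square mult.assoc)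
    finally have "2 * s * (y \<bullet> y) + s\<^sup>2 * b \<le> s * (y \<bullet> y)" by linarith
    also have "s * (y \<bullet> y) < 0" using \<open>s < 0\<close> pos by (simp add: mult_neg_pos)
    finally show False using expand[of s] by simp
  qed
  then have "y = 0" by (metis inner_gt_zero_iff not_le)
  then show ?thesis unfolding y_def .
qed

lemma det_eq_0_iff_nontrivial_kernel:
  "det (M::real^'n^'n) = 0 \<longleftrightarrow> (\<exists>x. x \<noteq> 0 \<and> M *v x = 0)"
  by (metis invertible_det_nz invertible_left_inverse matrix_left_invertible_ker)

lemma poly_det_pencil: "poly (det (pencil E A)) t = det (t *\<^sub>R E - A)"
  unfolding det_def by (simp add: pencil_def poly_sum poly_prod algebra_simps)

lemma regular_pencil_iff_det_nonzero:
  "regular_pencil E A \<longleftrightarrow> (\<exists>t. det (t *\<^sub>R E - A) \<noteq> 0)"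
  unfolding regular_pencil_def poly_all_0_iff_0[symmetric] poly_det_pencil by blast

lemma coercive_on_subspace:
  fixes K :: "(real^'n) set" and f :: "real^'n \<Rightarrow> real"
  assumes K: "subspace K" and cont: "continuous_on UNIV f"
    and hom: "\<And>c w. f (c *\<^sub>R w) = c\<^sup>2 * f w"
    and pos: "\<And>w. w \<in> K \<Longrightarrow> w \<noteq> 0 \<Longrightarrow> f w > 0"
  shows "\<exists>c>0. \<forall>w\<in>K. c * (norm w)\<^sup>2 \<le> f w"
proof (cases "K \<subseteq> {0}")
  case True
  have "f 0 = 0" using hom[of 0 0] by simp
  with True show ?thesis by (intro exI[of _ 1]) auto
next
  case False
  then obtain w0 where w0: "w0 \<in> K" "w0 \<noteq> 0" by auto
  let ?S = "sphere 0 1 \<inter> K"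
  have compact: "compact ?S" using closed_subspace[OF K] by (intro compact_Int_closed) auto
  have "(1 / norm w0) *\<^sub>R w0 \<in> ?S" using w0 K by (auto simp: subspace_scale)
  then have nonempty: "?S \<noteq> {}" by blast
  obtain m where m: "m \<in> ?S" and min: "\<And>u. u \<in> ?S \<Longrightarrow> f m \<le> f u"
    using continuous_attains_inf[OF compact nonempty continuous_on_subset[OF cont]] by blast
  have "m \<noteq> 0" using m by auto
  then have "f m > 0" using m pos[of m] by blast
  moreover have "f m * (norm w)\<^sup>2 \<le> f w" if "w \<in> K" for w
  proof (cases "w = 0")
    case True
    then show ?thesis using hom[of 0 0] by simp
  next
    case False
    let ?u = "(1 / norm w) *\<^sub>R w"
    have "?u \<in> ?S" using \<open>w \<in> K\<close> False K by (auto simp: subspace_scale)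
    then have "f m * (norm w)\<^sup>2 \<le> f ?u * (norm w)\<^sup>2" using min by (simp add: mult_right_mono)
    moreover have "f w = (norm w)\<^sup>2 * f ?u"
      using hom[of "norm w" ?u] False by simp
    ultimately show ?thesis by (simp add: mult.commute)
  qed
  ultimately show ?thesis by blast
qed

lemma smooth_solution_derivatives:
  fixes x :: "real \<Rightarrow> real^'n" and E A :: "real^'n^'m"
  assumes "smooth_fun x"
    and ode: "\<And>t. ((\<lambda>s. E *v x s) has_vector_derivative (A *v x t)) (at t)"
  obtains f where "f 0 = x" "\<And>k t. (f k has_vector_derivative f (Suc k) t) (at t)"
    "\<And>k t. E *v f (Suc k) t = A *v f k t"
proof -
  obtain f where f0: "f 0 = x" and f: "\<And>k t. (f k has_vector_derivative f (Suc k) t) (at t)"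
    using assms(1) unfolding smooth_fun_def by blast
  have lin: "((\<lambda>s. N *v f k s) has_vector_derivative N *v f (Suc k) t) (at t)"
    for N :: "real^'n^'m" and k t
    by (rule bounded_linear.has_vector_derivative[OF matrix_vector_mul_bounded_linear f])
  have ode_k: "((\<lambda>s. E *v f k s) has_vector_derivative A *v f k t) (at t)" for k t
  proof (induction k arbitrary: t)
    case 0
    show ?case using ode f0 by simp
  next
    case (Suc k)
    have "(\<lambda>s. E *v f (Suc k) s) = (\<lambda>s. A *v f k s)"
      using Suc.IH lin vector_derivative_unique_at by blast
    then show ?case using lin[of A k] by simp
  qed
  have "E *v f (Suc k) t = A *v f k t" for k t
    using ode_k lin vector_derivative_unique_at by blast
  with f0 f show ?thesis using that by blast
qed

locale dissipative_hamiltonian =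
  fixes E J R Q :: "real^'n^'n"
  assumes skew_J: "transpose J = - J"
    and sym_R: "transpose R = R" and psd_R: "psd R"
    and sym_energy: "transpose Q ** E = transpose E ** Q"
    and psd_energy: "psd (transpose Q ** E)"
begin

abbreviation A where "A \<equiv> (J - R) ** Q"
abbreviation M where "M \<equiv> transpose Q ** E"
abbreviation common_kernel where
  "common_kernel \<equiv> ker E \<inter> ker (transpose Q ** J ** Q) \<inter> ker (transpose Q ** R ** Q)"

lemma sym_M: "transpose M = M"
  using sym_energy by (simp add: matrix_transpose_mul)

lemma A_mult: "A *v v = J *v (Q *v v) - R *v (Q *v v)"
  by (simp add: matrix_vector_mul_assoc[symmetric] matrix_vector_mult_diff_rdistrib)

lemma inner_transpose_Q: "(Q *v a) \<bullet> b = a \<bullet> (transpose Q *v b)"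
  using inner_matrix_vector_transpose[of a "transpose Q" b] by simp

lemma energy_dissipation:
  "v \<bullet> (transpose Q *v (A *v v)) = - ((Q *v v) \<bullet> (R *v (Q *v v)))"
proof -
  have "(Q *v v) \<bullet> (J *v (Q *v v)) = 0"
    using inner_skew_matrix[OF skew_J, of "Q *v v" "Q *v v"] by simp
  then show ?thesis by (simp add: inner_transpose_Q[symmetric] A_mult inner_diff_right)
qed

lemma common_kernel_imp_singular:
  assumes v: "v \<in> common_kernel" "v \<noteq> 0"
  shows "det (t *\<^sub>R E - A) = 0"
proof (cases "Q *v v = 0")
  case True
  have "E *v v = 0" using v by (simp add: ker_def)
  then have "(t *\<^sub>R E - A) *v v = 0"
    by (simp add: A_mult True matrix_vector_mult_diff_rdistrib scaleR_matrix_vector_assoc[symmetric])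
  then show ?thesis using v(2) det_eq_0_iff_nontrivial_kernel by blast
next
  case False
  let ?P = "t *\<^sub>R E - A"
  have kerQ: "transpose Q *v (E *v v) = 0" "transpose Q *v (J *v (Q *v v)) = 0"
    "transpose Q *v (R *v (Q *v v)) = 0"
    using v by (auto simp: ker_def matrix_vector_mul_assoc[symmetric])
  have orthogonal: "(Q *v v) \<bullet> (?P *v y) = 0" for y
  proof -
    have "(Q *v v) \<bullet> (E *v y) = y \<bullet> (M *v v)"
      using inner_symmetric_matrix[OF sym_M, of v y]
      by (simp add: inner_transpose_Q matrix_vector_mul_assoc[symmetric])
    moreover have "(Q *v v) \<bullet> (J *v (Q *v y)) = - ((Q *v y) \<bullet> (J *v (Q *v v)))"
      by (rule inner_skew_matrix[OF skew_J])
    moreover have "(Q *v v) \<bullet> (R *v (Q *v y)) = (Q *v y) \<bullet> (R *v (Q *v v))"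
      by (rule inner_symmetric_matrix[OF sym_R])
    ultimately show ?thesis using kerQ
      by (simp add: matrix_vector_mult_diff_rdistrib scaleR_matrix_vector_assoc[symmetric]
          A_mult inner_diff_right inner_transpose_Q matrix_vector_mul_assoc[symmetric])
  qed
  have "transpose ?P *v (Q *v v) = 0"
    using orthogonal[of "transpose ?P *v (Q *v v)"]
      inner_matrix_vector_transpose[of "Q *v v" ?P] by simp
  then have "det (transpose ?P) = 0" using det_eq_0_iff_nontrivial_kernel False by blast
  then show ?thesis by simp
qed

lemma pencil_kernel_at_pos:
  assumes "t > 0" and ker: "(t *\<^sub>R E - A) *v v = 0"
  shows "M *v v = 0" and "R *v (Q *v v) = 0" and "t *\<^sub>R (E *v v) = J *v (Q *v v)"
proof -
  have tE: "t *\<^sub>R (E *v v) = A *v v"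
    using ker by (simp add: matrix_vector_mult_diff_rdistrib scaleR_matrix_vector_assoc[symmetric])
  have "v \<bullet> (transpose Q *v (A *v v)) = t * (v \<bullet> (M *v v))"
    unfolding tE[symmetric] by (simp add: matrix_vector_mul_assoc[symmetric] matrix_vector_mult_scaleR)
  then have sum0: "t * (v \<bullet> (M *v v)) + (Q *v v) \<bullet> (R *v (Q *v v)) = 0"
    using energy_dissipation by simp
  have "0 \<le> v \<bullet> (M *v v)" and "0 \<le> (Q *v v) \<bullet> (R *v (Q *v v))"
    using psd_energy psd_R unfolding psd_def by auto
  moreover from this(1) \<open>t > 0\<close> have "0 \<le> t * (v \<bullet> (M *v v))" by simp
  ultimately have "t * (v \<bullet> (M *v v)) = 0" and "(Q *v v) \<bullet> (R *v (Q *v v)) = 0"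
    using sum0 by linarith+
  with \<open>t > 0\<close> have "v \<bullet> (M *v v) = 0" and "(Q *v v) \<bullet> (R *v (Q *v v)) = 0" by simp_all
  then show "M *v v = 0" and RQ: "R *v (Q *v v) = 0"
    using psd_quadratic_form_zero_imp_kernel sym_M psd_energy sym_R psd_R by blast+
  show "t *\<^sub>R (E *v v) = J *v (Q *v v)" using tE by (simp add: A_mult RQ)
qed

lemma E_bounded_below_on_kernel:
  assumes trivial: "common_kernel = {0}"
  shows "\<exists>c>0. \<forall>w \<in> ker (transpose Q ** J ** Q) \<inter> ker (transpose Q ** R ** Q).
           c * (norm w)\<^sup>2 \<le> (norm (E *v w))\<^sup>2"
proof (rule coercive_on_subspace)
  show "subspace (ker (transpose Q ** J ** Q) \<inter> ker (transpose Q ** R ** Q))"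
    unfolding subspace_def ker_def by (simp add: matrix_vector_right_distrib matrix_vector_mult_scaleR)
  show "continuous_on UNIV (\<lambda>w. (norm (E *v w))\<^sup>2)"
    by (intro continuous_intros linear_continuous_on matrix_vector_mul_bounded_linear)
  show "(norm (E *v (a *\<^sub>R w)))\<^sup>2 = a\<^sup>2 * (norm (E *v w))\<^sup>2" for a w
    by (simp add: matrix_vector_mult_scaleR power_mult_distrib)
  fix w assume "w \<in> ker (transpose Q ** J ** Q) \<inter> ker (transpose Q ** R ** Q)" "w \<noteq> 0"
  with trivial have "w \<notin> ker E" by blast
  then show "(norm (E *v w))\<^sup>2 > 0" by (simp add: ker_def)
qed

lemma singular_imp_common_kernel_nontrivial:
  assumes singular: "\<And>t. det (t *\<^sub>R E - A) = 0"
  shows "common_kernel \<noteq> {0}"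
proof
  assume "common_kernel = {0}"
  then obtain c where "c > 0" and c: "\<And>w. w \<in> ker (transpose Q ** J ** Q) \<inter> ker (transpose Q ** R ** Q)
      \<Longrightarrow> c * (norm w)\<^sup>2 \<le> (norm (E *v w))\<^sup>2"
    using E_bounded_below_on_kernel by blast
  obtain B where B: "\<And>x. norm ((J ** Q) *v x) \<le> norm x * B"
    using bounded_linear.bounded[OF matrix_vector_mul_bounded_linear] by blast
  define t where "t = sqrt ((B\<^sup>2 + 1) / c)"
  have "(B\<^sup>2 + 1) / c > 0" using \<open>c > 0\<close> by (simp add: add_nonneg_pos)
  then have "t > 0" and t2: "t\<^sup>2 * c = B\<^sup>2 + 1" using \<open>c > 0\<close> by (simp_all add: t_def)
  obtain v where "v \<noteq> 0" and "(t *\<^sub>R E - A) *v v = 0"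
    using singular[of t] det_eq_0_iff_nontrivial_kernel[of "t *\<^sub>R E - A"] by blast
  note v = pencil_kernel_at_pos[OF \<open>t > 0\<close> this(2)]
  have "v \<in> ker (transpose Q ** J ** Q) \<inter> ker (transpose Q ** R ** Q)"
    using v(1,2) v(3)[symmetric]
    by (simp add: ker_def matrix_vector_mul_assoc[symmetric] matrix_vector_mult_scaleR)
  have "norm (J *v (Q *v v)) = t * norm (E *v v)"
    using v(3) \<open>t > 0\<close> by (metis norm_scaleR abs_of_pos)
  have "t\<^sup>2 * c * (norm v)\<^sup>2 \<le> t\<^sup>2 * (norm (E *v v))\<^sup>2"
    using c[OF \<open>v \<in> _\<close>] by (simp add: mult_left_mono mult.assoc)
  also have "\<dots> = (norm (J *v (Q *v v)))\<^sup>2"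
    using \<open>norm (J *v (Q *v v)) = t * norm (E *v v)\<close> by (simp add: power_mult_distrib)
  also have "\<dots> \<le> (norm v * B)\<^sup>2"
    using B[of v] by (metis matrix_vector_mul_assoc norm_ge_zero power_mono)
  also have "\<dots> = B\<^sup>2 * (norm v)\<^sup>2" by (simp add: power_mult_distrib)
  finally have "(B\<^sup>2 + 1) * (norm v)\<^sup>2 \<le> B\<^sup>2 * (norm v)\<^sup>2" by (simp only: t2)
  then have "(norm v)\<^sup>2 \<le> 0" by (simp add: algebra_simps)
  then show False using \<open>v \<noteq> 0\<close> by simp
qed

theorem regular_iff_common_kernel_trivial:
  "regular_pencil E A \<longleftrightarrow> common_kernel = {0}"
proof
  assume "regular_pencil E A"
  then obtain t where "det (t *\<^sub>R E - A) \<noteq> 0" by (auto simp: regular_pencil_iff_det_nonzero)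
  moreover have "0 \<in> common_kernel" by (simp add: ker_def)
  ultimately show "common_kernel = {0}" using common_kernel_imp_singular by blast
next
  assume "common_kernel = {0}"
  then show "regular_pencil E A"
    using singular_imp_common_kernel_nontrivial regular_pencil_iff_det_nonzero by blast
qed

definition consistent_states :: "(real^'n) set" where
  "consistent_states = {w. \<exists>w1 w2. E *v w1 = A *v w \<and> E *v w2 = A *v w1}"

lemma subspace_consistent_states: "subspace consistent_states"
proof (unfold subspace_def, intro conjI ballI allI)
  show "0 \<in> consistent_states" unfolding consistent_states_def by (intro CollectI exI[of _ 0]) simp
next
  fix x y assume "x \<in> consistent_states" "y \<in> consistent_states"
  then obtain x1 x2 y1 y2 where "E *v x1 = A *v x" "E *v x2 = A *v x1"
    "E *v y1 = A *v y" "E *v y2 = A *v y1" unfolding consistent_states_def by blast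
  then show "x + y \<in> consistent_states" unfolding consistent_states_def
    by (intro CollectI exI[of _ "x1 + y1"] exI[of _ "x2 + y2"]) (simp add: matrix_vector_right_distrib)
next
  fix a :: real and x assume "x \<in> consistent_states"
  then obtain x1 x2 where "E *v x1 = A *v x" "E *v x2 = A *v x1"
    unfolding consistent_states_def by blast
  then show "a *\<^sub>R x \<in> consistent_states" unfolding consistent_states_def
    by (intro CollectI exI[of _ "a *\<^sub>R x1"] exI[of _ "a *\<^sub>R x2"]) (simp add: matrix_vector_mult_scaleR)
qed

lemma zero_energy_consistent_state:
  assumes "w \<in> consistent_states" and zero: "w \<bullet> (M *v w) = 0"
  shows "M *v w = 0" and "R *v (Q *v w) = 0" and "transpose Q *v (J *v (Q *v w)) = 0"
proof -
  show Mw: "M *v w = 0" by (rule psd_quadratic_form_zero_imp_kernel[OF sym_M psd_energy zero])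
  obtain w1 w2 where w1: "E *v w1 = A *v w" and w2: "E *v w2 = A *v w1"
    using assms(1) unfolding consistent_states_def by auto
  have "w \<bullet> (transpose Q *v (A *v w)) = w1 \<bullet> (M *v w)"
    using inner_symmetric_matrix[OF sym_M, of w w1]
    by (simp add: w1 matrix_vector_mul_assoc[symmetric])
  then have "(Q *v w) \<bullet> (R *v (Q *v w)) = 0" using energy_dissipation[of w] by (simp add: Mw)
  then show RQw: "R *v (Q *v w) = 0" by (rule psd_quadratic_form_zero_imp_kernel[OF sym_R psd_R])
  then have JRw: "(J - R) *v (Q *v w) = J *v (Q *v w)"
    by (simp add: matrix_vector_mult_diff_rdistrib)
  have "w1 \<bullet> (M *v w1) = (Q *v w1) \<bullet> (J *v (Q *v w))"
    by (simp add: matrix_vector_mul_assoc[symmetric] w1 JRw inner_transpose_Q)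
  also have "\<dots> = - ((Q *v w) \<bullet> (E *v w2 + R *v (Q *v w1)))"
  proof -
    have "J *v (Q *v w1) = E *v w2 + R *v (Q *v w1)" using w2 by (simp add: A_mult)
    then show ?thesis using inner_skew_matrix[OF skew_J, of "Q *v w1" "Q *v w"] by simp
  qed
  also have "\<dots> = - (w2 \<bullet> (M *v w) + (Q *v w1) \<bullet> (R *v (Q *v w)))"
    using inner_symmetric_matrix[OF sym_M, of w w2] inner_symmetric_matrix[OF sym_R, of "Q *v w"]
    by (simp add: inner_add_right inner_transpose_Q matrix_vector_mul_assoc[symmetric])
  finally have "w1 \<bullet> (M *v w1) = 0" by (simp add: Mw RQw)
  then have "M *v w1 = 0" by (rule psd_quadratic_form_zero_imp_kernel[OF sym_M psd_energy])
  then show "transpose Q *v (J *v (Q *v w)) = 0"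
    by (simp add: matrix_vector_mul_assoc[symmetric] w1 JRw)
qed

lemma energy_pos_on_consistent_states:
  assumes trivial: "common_kernel = {0}" and kerQ: "ker Q \<subseteq> ker E"
    and w: "w \<in> consistent_states" "w \<noteq> 0"
  shows "w \<bullet> (M *v w) > 0"
proof (rule ccontr)
  assume "\<not> w \<bullet> (M *v w) > 0"
  then have "w \<bullet> (M *v w) = 0"
    using psd_energy[unfolded psd_def, rule_format, of w] by linarith
  note zero = zero_energy_consistent_state[OF w(1) this]
  have "Q *v u = 0 \<Longrightarrow> u = 0" for u
    using kerQ trivial by (auto simp: ker_def matrix_vector_mul_assoc[symmetric])
  then have "det (transpose Q) \<noteq> 0" using det_eq_0_iff_nontrivial_kernel by auto
  moreover have "transpose Q *v (E *v w) = 0"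
    using zero(1) by (simp add: matrix_vector_mul_assoc[symmetric])
  ultimately have "E *v w = 0" using det_eq_0_iff_nontrivial_kernel by blast
  then have "w \<in> common_kernel"
    using zero(2,3) by (simp add: ker_def matrix_vector_mul_assoc[symmetric])
  then show False using trivial w(2) by blast
qed

theorem stable_if_common_kernel_trivial:
  assumes "common_kernel = {0}" and "ker Q \<subseteq> ker E"
  shows "stable_pair E A"
  unfolding stable_pair_def
proof (intro allI impI, elim conjE)
  fix x :: "real \<Rightarrow> real^'n"
  assume "smooth_fun x" and "\<forall>t. ((\<lambda>s. E *v x s) has_vector_derivative A *v x t) (at t)"
  then obtain f where f0: "f 0 = x" and f: "\<And>k t. (f k has_vector_derivative f (Suc k) t) (at t)"
    and ode: "\<And>k t. E *v f (Suc k) t = A *v f k t"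
    using smooth_solution_derivatives by metis
  have consistent: "x t \<in> consistent_states" for t
    using ode[of 0 t] ode[of 1 t] f0 by (auto simp: consistent_states_def)
  have "\<exists>c>0. \<forall>w\<in>consistent_states. c * (norm w)\<^sup>2 \<le> w \<bullet> (M *v w)"
  proof (rule coercive_on_subspace[OF subspace_consistent_states])
    show "continuous_on UNIV (\<lambda>w. w \<bullet> (M *v w))"
      by (intro continuous_on_inner continuous_on_id linear_continuous_on
          matrix_vector_mul_bounded_linear)
  qed (simp_all add: energy_pos_on_consistent_states[OF assms] matrix_vector_mult_scaleR
      power2_eq_square)
  then obtain c where "c > 0" and c: "\<And>w. w \<in> consistent_states \<Longrightarrow> c * (norm w)\<^sup>2 \<le> w \<bullet> (M *v w)"
    by blast
  define H where "H s = x s \<bullet> (M *v x s)" for s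
  have "(H has_real_derivative - 2 * ((Q *v x t) \<bullet> (R *v (Q *v x t)))) (at t)" for t
  proof -
    have "(H has_vector_derivative x t \<bullet> (M *v f 1 t) + f 1 t \<bullet> (M *v x t)) (at t)"
      unfolding H_def using f[of 0 t] f0
      by (auto intro!: bounded_bilinear.has_vector_derivative[OF bounded_bilinear_inner]
          bounded_linear.has_vector_derivative[OF matrix_vector_mul_bounded_linear])
    moreover have "x t \<bullet> (M *v f 1 t) = - ((Q *v x t) \<bullet> (R *v (Q *v x t)))"
      using energy_dissipation[of "x t"] ode[of 0 t] f0
      by (simp add: matrix_vector_mul_assoc[symmetric])
    ultimately show ?thesis
      using inner_symmetric_matrix[OF sym_M, of "f 1 t" "x t"]
      by (simp add: has_real_derivative_iff_has_vector_derivative)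
  qed
  moreover have "0 \<le> (Q *v x t) \<bullet> (R *v (Q *v x t))" for t using psd_R unfolding psd_def by auto
  ultimately have H_decreasing: "H t \<le> H 0" if "t \<ge> 0" for t
    using DERIV_nonpos_imp_nonincreasing[of 0 t H] that by fastforce
  show "bounded (x ` {0..})"
    unfolding bounded_iff
  proof (intro exI ballI)
    fix y assume "y \<in> x ` {0..}"
    then obtain t where "t \<ge> 0" "y = x t" by auto
    then have "c * (norm y)\<^sup>2 \<le> H 0"
      using c[OF consistent[of t]] H_decreasing[of t] unfolding H_def by simp
    then show "norm y \<le> sqrt (H 0 / c)"
      using \<open>c > 0\<close> by (intro real_le_rsqrt) (simp add: field_simps)
  qed
qed

end

theorem corollary9:
  fixes E J R Q :: "real^'n^'n"
  assumes "J = - transpose J"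
    and "R = transpose R" and "psd R"
    and "transpose Q ** E = transpose E ** Q" and "psd (transpose Q ** E)"
  shows "(regular_pencil E ((J - R) ** Q) \<longleftrightarrow>
            ker E \<inter> ker (transpose Q ** J ** Q) \<inter> ker (transpose Q ** R ** Q) = {0})
         \<and> (ker E \<inter> ker (transpose Q ** J ** Q) \<inter> ker (transpose Q ** R ** Q) = {0}
              \<and> ker Q \<subseteq> ker E \<longrightarrow> stable_pair E ((J - R) ** Q))"
proof -
  interpret dissipative_hamiltonian E J R Q
    using assms by unfold_locales (metis minus_minus, simp_all)
  show ?thesis using regular_iff_common_kernel_trivial stable_if_common_kernel_trivial by blast
qed

end
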